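(* Let $G$ and $H$ be finite graphs such that $H$ fractionally tiles $G$. Let $f(K)$ denote any one of the following for a graph $K$: (a) the number of independent sets in $K$; (b) the number of proper colorings of $K$ with a fixed number $q$ of colors; (c) the total weight of the homomorphisms from $K$ to a fixed finite graph $F$, where the vertices of $F$ carry arbitrary fixed positive weights. Then $$f(G)^{1/|G|}\le f(H)^{1/|H|}.$$
   Context: A set of vertices is independent if no two of its vertices are adjacent (the empty set counts). A homomorphism from $K$ to $F$ is a map $V(K)\to V(F)$ sending adjacent vertices to adjacent vertices. Given $w:V(F)\to(0,\infty)$, the weight of a map $\phi:V(K)\to V(F)$ is $\prod_{x\in V(K)}w(\phi(x))$, and the total weight of a set of maps is the sum of their weights. A copy of $H$ in $G$ is a subgraph isomorphic to $H$; $H$ fractionally tiles $G$ means there is a finite list of copies of $H$ in $G$ such that every vertex of $G$ is covered the same number of times. $|K|$ is the number of vertices. *)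

theory Defs
  imports Complex_Main "HOL-Library.FuncSet"
begin

definition graph :: "'a set \<Rightarrow> ('a \<times> 'a) set \<Rightarrow> bool" where
  "graph V E \<longleftrightarrow> finite V \<and> E \<subseteq> V \<times> V \<and> sym E \<and> (\<forall>x. (x, x) \<notin> E)"

definition graph_iso :: "'a set \<Rightarrow> ('a \<times> 'a) set \<Rightarrow> 'b set \<Rightarrow> ('b \<times> 'b) set \<Rightarrow> bool" where
  "graph_iso V E V' E' \<longleftrightarrow>
     (\<exists>f. bij_betw f V V' \<and> (\<forall>x\<in>V. \<forall>y\<in>V. (x, y) \<in> E \<longleftrightarrow> (f x, f y) \<in> E'))"

definition is_copy :: "'b set \<Rightarrow> ('b \<times> 'b) set \<Rightarrow> 'a set \<Rightarrow> ('a \<times> 'a) set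
                       \<Rightarrow> 'a set \<times> ('a \<times> 'a) set \<Rightarrow> bool" where
  "is_copy VH EH VG EG C \<longleftrightarrow>
     fst C \<subseteq> VG \<and> snd C \<subseteq> EG \<and> snd C \<subseteq> fst C \<times> fst C \<and> graph_iso (fst C) (snd C) VH EH"

definition fractionally_tiles :: "'b set \<Rightarrow> ('b \<times> 'b) set \<Rightarrow> 'a set \<Rightarrow> ('a \<times> 'a) set \<Rightarrow> bool" where
  "fractionally_tiles VH EH VG EG \<longleftrightarrow>
     (\<exists>cs c. (\<forall>C\<in>set cs. is_copy VH EH VG EG C) \<and> c > (0::nat) \<and>
             (\<forall>v\<in>VG. length (filter (\<lambda>C. v \<in> fst C) cs) = c))"

definition indep_sets :: "'a set \<Rightarrow> ('a \<times> 'a) set \<Rightarrow> 'a set set" where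
  "indep_sets V E = {S. S \<subseteq> V \<and> (\<forall>x\<in>S. \<forall>y\<in>S. (x, y) \<notin> E)}"

definition proper_colorings :: "nat \<Rightarrow> 'a set \<Rightarrow> ('a \<times> 'a) set \<Rightarrow> ('a \<Rightarrow> nat) set" where
  "proper_colorings q V E = {\<phi> \<in> V \<rightarrow>\<^sub>E {..<q}. \<forall>(x, y)\<in>E. \<phi> x \<noteq> \<phi> y}"

definition homs :: "'a set \<Rightarrow> ('a \<times> 'a) set \<Rightarrow> 'c set \<Rightarrow> ('c \<times> 'c) set \<Rightarrow> ('a \<Rightarrow> 'c) set" where
  "homs V E VF EF = {\<phi> \<in> V \<rightarrow>\<^sub>E VF. \<forall>(x, y)\<in>E. (\<phi> x, \<phi> y) \<in> EF}"

definition hom_weight :: "('c \<Rightarrow> real) \<Rightarrow> 'a set \<Rightarrow> ('a \<times> 'a) set \<Rightarrow> 'c set \<Rightarrow> ('c \<times> 'c) set \<Rightarrow> real" where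
  "hom_weight w V E VF EF = (\<Sum>\<phi>\<in>homs V E VF EF. \<Prod>x\<in>V. w (\<phi> x))"

end

theory Submission
  imports Defs "HOL-Analysis.Convex"
begin

text \<open>Independent sets of K are the homomorphisms from K into the graph on {False, True} whose
  only non-edge is True--True, and proper q-colourings are the homomorphisms into the complete graph
  on q vertices, so all three quantities are weighted homomorphism counts. If copies
  C_1, ..., C_m of H cover every vertex of G exactly c times, then a homomorphism from G restricts
  to a homomorphism from each C_i, and Finner's inequality (proved by summing out one vertex at a
  time with the generalised Hoelder inequality) gives hom(G)^c \<le> hom(C_1) \<cdots> hom(C_m) =
  hom(H)^m. Double counting gives m |H| = c |G|.\<close>

lemma prod_le_sum_power_div_card:
  fixes x :: "'i \<Rightarrow> real"
  assumes "finite J" "card J = c" "c > 0" "\<And>i. i \<in> J \<Longrightarrow> 0 \<le> x i"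
  shows "(\<Prod>i\<in>J. x i) \<le> (\<Sum>i\<in>J. x i ^ c / c)"
proof -
  have "0 \<le> (\<Prod>i\<in>J. x i)" using assms(4) by (rule prod_nonneg)
  then have "(\<Prod>i\<in>J. x i) = ((\<Prod>i\<in>J. x i) ^ c) powr (1 / c)"
    using assms(3) by (simp add: powr_realpow'[symmetric] powr_powr)
  also have "\<dots> = (\<Prod>i\<in>J. x i ^ c) powr (1 / card J)"
    by (simp add: prod_power_distrib assms(2))
  also have "\<dots> \<le> (\<Sum>i\<in>J. x i ^ c / card J)"
    using assms by (intro arith_geom_mean) auto
  finally show ?thesis using assms(2) by simp
qed

lemma holder_normalized:
  fixes w :: "'a \<Rightarrow> real" and h :: "'i \<Rightarrow> 'a \<Rightarrow> real"
  assumes "finite A" "finite J" "card J = c" "c > 0"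
    and "\<And>a. a \<in> A \<Longrightarrow> 0 \<le> w a" "\<And>i a. i \<in> J \<Longrightarrow> a \<in> A \<Longrightarrow> 0 \<le> h i a"
    and norm: "\<And>i. i \<in> J \<Longrightarrow> (\<Sum>a\<in>A. w a * h i a ^ c) = 1"
  shows "(\<Sum>a\<in>A. w a * (\<Prod>i\<in>J. h i a)) \<le> 1"
proof -
  have "(\<Sum>a\<in>A. w a * (\<Prod>i\<in>J. h i a)) \<le> (\<Sum>a\<in>A. w a * (\<Sum>i\<in>J. h i a ^ c / c))"
    using assms by (intro sum_mono mult_left_mono prod_le_sum_power_div_card) auto
  also have "\<dots> = (\<Sum>i\<in>J. (\<Sum>a\<in>A. w a * h i a ^ c) / c)"
    by (simp add: sum_distrib_left sum_divide_distrib sum.swap[of _ A])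
  also have "\<dots> = 1" using assms(3,4) by (simp add: norm)
  finally show ?thesis .
qed

lemma holder_inequality:
  fixes w :: "'a \<Rightarrow> real" and h :: "'i \<Rightarrow> 'a \<Rightarrow> real"
  assumes A: "finite A" and J: "finite J" "card J = c" "c > 0"
    and w: "\<And>a. a \<in> A \<Longrightarrow> 0 \<le> w a" and h: "\<And>i a. i \<in> J \<Longrightarrow> a \<in> A \<Longrightarrow> 0 \<le> h i a"
  shows "(\<Sum>a\<in>A. w a * (\<Prod>i\<in>J. h i a)) \<le> (\<Prod>i\<in>J. root c (\<Sum>a\<in>A. w a * h i a ^ c))"
proof -
  define S where "S i = (\<Sum>a\<in>A. w a * h i a ^ c)" for i
  have S_nonneg: "0 \<le> S i" if "i \<in> J" for i
    unfolding S_def using w h that by (auto intro!: sum_nonneg)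
  show ?thesis
  proof (cases "\<exists>j\<in>J. S j = 0")
    case True
    then obtain j where j: "j \<in> J" "S j = 0" by blast
    have "w a * h j a ^ c = 0" if "a \<in> A" for a
      using j that w h sum_nonneg_eq_0_iff[OF A, of "\<lambda>a. w a * h j a ^ c"] by (simp add: S_def)
    then have "w a * (\<Prod>i\<in>J. h i a) = 0" if "a \<in> A" for a
      using that j(1) J(1) by (metis mult_eq_0_iff power_eq_0_iff prod_zero_iff)
    then have "(\<Sum>a\<in>A. w a * (\<Prod>i\<in>J. h i a)) = 0" by (simp add: sum.neutral)
    then show ?thesis using S_nonneg by (simp add: S_def prod_nonneg real_root_ge_zero)
  next
    case False
    with S_nonneg have S_pos: "0 < S i" if "i \<in> J" for i
      using that by fastforce
    define r where "r i = root c (S i)" for i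
    have r_pos: "0 < r i" if "i \<in> J" for i using S_pos[OF that] J(3) by (simp add: r_def)
    have "(\<Sum>a\<in>A. w a * (\<Prod>i\<in>J. h i a / r i)) \<le> 1"
    proof (rule holder_normalized[OF A J w])
      show "0 \<le> h i a / r i" if "i \<in> J" "a \<in> A" for i a
        using h[OF that] r_pos[OF that(1)] by simp
      show "(\<Sum>a\<in>A. w a * (h i a / r i) ^ c) = 1" if "i \<in> J" for i
        using S_pos[OF that] J(3)
        by (simp add: r_def power_divide sum_divide_distrib[symmetric] S_def[symmetric])
    qed
    moreover have "(\<Sum>a\<in>A. w a * (\<Prod>i\<in>J. h i a / r i))
        = (\<Sum>a\<in>A. w a * (\<Prod>i\<in>J. h i a)) / (\<Prod>i\<in>J. r i)"
      by (simp add: prod_dividef sum_divide_distrib)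
    moreover have "0 < (\<Prod>i\<in>J. r i)" using r_pos by (rule prod_pos)
    ultimately show ?thesis by (simp add: r_def S_def)
  qed
qed

lemma powr_inverse_le_of_power_le:
  fixes a b :: real and k m p q :: nat
  assumes "0 \<le> a" "0 \<le> b" "a ^ k \<le> b ^ m" "k * p = m * q" "k > 0" "p > 0"
  shows "a powr (1 / p) \<le> b powr (1 / q)"
proof -
  have "m > 0" "q > 0" using assms(4-6) by (metis nat_0_less_mult_iff)+
  define N where "N = real k * real p"
  have N: "N > 0" "N = real m * real q"
    using assms(4-6) unfolding N_def by (simp, metis of_nat_mult)
  have "a powr (1 / p) = (a ^ k) powr (1 / N)"
    using assms(1,5) by (simp add: powr_realpow'[symmetric] powr_powr N_def)
  also have "\<dots> \<le> (b ^ m) powr (1 / N)"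
    using assms(1,3) N by (intro powr_mono2) simp_all
  also have "\<dots> = b powr (1 / q)"
    using assms(2) \<open>m > 0\<close> by (simp add: powr_realpow'[symmetric] powr_powr N)
  finally show ?thesis .
qed

definition weight :: "('c \<Rightarrow> real) \<Rightarrow> 'a set \<Rightarrow> ('a \<Rightarrow> 'c) \<Rightarrow> real" where
  "weight w S x = (\<Prod>v\<in>S. w (x v))"

lemma weight_nonneg:
  "(\<And>a. a \<in> A \<Longrightarrow> 0 \<le> w a) \<Longrightarrow> x \<in> S \<rightarrow>\<^sub>E A \<Longrightarrow> 0 \<le> weight w S x"
  unfolding weight_def by (rule prod_nonneg) (auto simp: PiE_iff)

lemma weight_insert_upd:
  assumes "finite S" "v \<notin> S"
  shows "weight w (insert v S) (y(v := a)) = w a * weight w S y"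
  using assms unfolding weight_def by (auto intro!: prod.cong)

lemma sum_PiE_insert_weight:
  assumes "finite S" "v \<notin> S"
  shows "(\<Sum>x\<in>insert v S \<rightarrow>\<^sub>E A. weight w (insert v S) x * F x)
       = (\<Sum>y\<in>S \<rightarrow>\<^sub>E A. weight w S y * (\<Sum>a\<in>A. w a * F (y(v := a))))"
proof -
  have "(\<Sum>x\<in>insert v S \<rightarrow>\<^sub>E A. weight w (insert v S) x * F x)
      = (\<Sum>(a, y)\<in>A \<times> (S \<rightarrow>\<^sub>E A). weight w (insert v S) (y(v := a)) * F (y(v := a)))"
    using assms(2)
    by (intro sum.reindex_bij_witness[of _ "\<lambda>(a, y). y(v := a)" "\<lambda>x. (x v, x(v := undefined))"])
       (auto simp: PiE_def extensional_def)
  also have "\<dots> = (\<Sum>a\<in>A. \<Sum>y\<in>S \<rightarrow>\<^sub>E A. weight w S y * (w a * F (y(v := a))))"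
    by (simp add: sum.cartesian_product weight_insert_upd[OF assms] ac_simps)
  also have "\<dots> = (\<Sum>y\<in>S \<rightarrow>\<^sub>E A. weight w S y * (\<Sum>a\<in>A. w a * F (y(v := a))))"
    by (simp add: sum.swap[of _ A] sum_distrib_left)
  finally show ?thesis .
qed

theorem finner_inequality:
  fixes C :: "'i \<Rightarrow> 'a set" and f :: "'i \<Rightarrow> ('a \<Rightarrow> 'c) \<Rightarrow> real"
  assumes "finite V" "finite A" "finite I" "\<And>a. a \<in> A \<Longrightarrow> 0 \<le> w a"
    and "\<And>i. i \<in> I \<Longrightarrow> C i \<subseteq> V" "\<And>v. v \<in> V \<Longrightarrow> card {i\<in>I. v \<in> C i} = c"
    and "c > 0" "\<And>i y. 0 \<le> f i y"
  shows "(\<Sum>x\<in>V \<rightarrow>\<^sub>E A. weight w V x * (\<Prod>i\<in>I. f i (restrict x (C i)))) ^ c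
         \<le> (\<Prod>i\<in>I. \<Sum>y\<in>C i \<rightarrow>\<^sub>E A. weight w (C i) y * f i y ^ c)"
  using assms
proof (induction V arbitrary: C f rule: finite_induct)
  case empty
  then have "C i = {}" if "i \<in> I" for i using that by blast
  then show ?case by (simp add: weight_def prod_power_distrib cong: prod.cong)
next
  case (insert v V)
  note A = \<open>finite A\<close> and I = \<open>finite I\<close> and w = \<open>\<And>a. a \<in> A \<Longrightarrow> 0 \<le> w a\<close>
    and c = \<open>c > 0\<close> and f = \<open>\<And>i y. 0 \<le> f i y\<close>
  define J where "J = {i\<in>I. v \<in> C i}"
  define C' where "C' i = C i - {v}" for i
  \<comment> \<open>Summing out v, Hoelder's inequality over the c factors with v \<in> C i replaces each of
    them by its L^c-norm in the variable v.\<close>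
  define f' where "f' i y = (if i \<in> J then root c (\<Sum>a\<in>A. w a * f i (y(v := a)) ^ c) else f i y)"
    for i y
  have J: "finite J" "J \<subseteq> I" "card J = c"
    using I insert.prems(5)[of v] by (auto simp: J_def)
  have f'_nonneg: "0 \<le> f' i y" for i y
    unfolding f'_def using f w by (auto intro!: real_root_ge_zero sum_nonneg)
  have pointwise: "(\<Sum>a\<in>A. w a * (\<Prod>i\<in>I. f i (restrict (y(v := a)) (C i))))
      \<le> (\<Prod>i\<in>I. f' i (restrict y (C' i)))" for y
  proof -
    have restrict_upd: "restrict (y(v := a)) (C i)
        = (if i \<in> J then (restrict y (C' i))(v := a) else restrict y (C' i))" if "i \<in> I" for i a
      using that by (auto simp: J_def C'_def fun_eq_iff)
    have "(\<Prod>i\<in>I. f i (restrict (y(v := a)) (C i)))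
        = (\<Prod>i\<in>I - J. f i (restrict y (C' i))) * (\<Prod>i\<in>J. f i ((restrict y (C' i))(v := a)))"
      for a
      using I J by (subst prod.subset_diff[of J I]) (auto simp: restrict_upd intro!: prod.cong)
    then have "(\<Sum>a\<in>A. w a * (\<Prod>i\<in>I. f i (restrict (y(v := a)) (C i))))
        = (\<Prod>i\<in>I - J. f i (restrict y (C' i)))
          * (\<Sum>a\<in>A. w a * (\<Prod>i\<in>J. f i ((restrict y (C' i))(v := a))))"
      by (simp add: sum_distrib_left ac_simps)
    also have "\<dots> \<le> (\<Prod>i\<in>I - J. f i (restrict y (C' i)))
          * (\<Prod>i\<in>J. root c (\<Sum>a\<in>A. w a * f i ((restrict y (C' i))(v := a)) ^ c))"
      using A J c w f by (intro mult_left_mono holder_inequality prod_nonneg) auto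
    also have "\<dots> = (\<Prod>i\<in>I. f' i (restrict y (C' i)))"
      using I J by (simp add: f'_def prod.subset_diff[of J I])
    finally show ?thesis .
  qed
  have moment: "(\<Sum>y\<in>C' i \<rightarrow>\<^sub>E A. weight w (C' i) y * f' i y ^ c)
      = (\<Sum>y\<in>C i \<rightarrow>\<^sub>E A. weight w (C i) y * f i y ^ c)" if "i \<in> I" for i
  proof (cases "i \<in> J")
    case True
    then have "C i = insert v (C' i)" "v \<notin> C' i" by (auto simp: J_def C'_def)
    moreover have "finite (C' i)"
      using insert.prems(4)[OF that] insert.hyps(1) by (auto simp: C'_def intro: finite_subset)
    ultimately show ?thesis
      using True c w f by (simp add: sum_PiE_insert_weight f'_def sum_nonneg)
  next
    case False
    then show ?thesis using that by (simp add: J_def C'_def f'_def)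
  qed
  have IH: "(\<Sum>y\<in>V \<rightarrow>\<^sub>E A. weight w V y * (\<Prod>i\<in>I. f' i (restrict y (C' i)))) ^ c
      \<le> (\<Prod>i\<in>I. \<Sum>y\<in>C' i \<rightarrow>\<^sub>E A. weight w (C' i) y * f' i y ^ c)"
  proof (rule insert.IH[OF A I w _ _ c f'_nonneg])
    show "C' i \<subseteq> V" if "i \<in> I" for i using insert.prems(4)[OF that] by (auto simp: C'_def)
    show "card {i\<in>I. u \<in> C' i} = c" if "u \<in> V" for u
    proof -
      have "u \<noteq> v" using that insert.hyps(2) by blast
      then show ?thesis using insert.prems(5)[of u] that by (simp add: C'_def)
    qed
  qed
  have "(\<Sum>x\<in>insert v V \<rightarrow>\<^sub>E A. weight w (insert v V) x * (\<Prod>i\<in>I. f i (restrict x (C i))))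
      \<le> (\<Sum>y\<in>V \<rightarrow>\<^sub>E A. weight w V y * (\<Prod>i\<in>I. f' i (restrict y (C' i))))"
    unfolding sum_PiE_insert_weight[OF insert.hyps]
    using w by (intro sum_mono mult_left_mono pointwise weight_nonneg)
  then have "(\<Sum>x\<in>insert v V \<rightarrow>\<^sub>E A. weight w (insert v V) x * (\<Prod>i\<in>I. f i (restrict x (C i)))) ^ c
      \<le> (\<Sum>y\<in>V \<rightarrow>\<^sub>E A. weight w V y * (\<Prod>i\<in>I. f' i (restrict y (C' i)))) ^ c"
    using w f by (intro power_mono sum_nonneg mult_nonneg_nonneg prod_nonneg weight_nonneg) auto
  also note IH
  also have "(\<Prod>i\<in>I. \<Sum>y\<in>C' i \<rightarrow>\<^sub>E A. weight w (C' i) y * f' i y ^ c)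
      = (\<Prod>i\<in>I. \<Sum>y\<in>C i \<rightarrow>\<^sub>E A. weight w (C i) y * f i y ^ c)"
    by (rule prod.cong[OF refl moment])
  finally show ?case .
qed

lemma hom_weight_eq_sum_weight: "hom_weight w V E VF EF = (\<Sum>\<phi>\<in>homs V E VF EF. weight w V \<phi>)"
  by (simp add: hom_weight_def weight_def)

lemma homs_subset_PiE: "homs V E VF EF \<subseteq> V \<rightarrow>\<^sub>E VF"
  unfolding homs_def by auto

lemma hom_weight_nonneg:
  assumes "\<And>a. a \<in> VF \<Longrightarrow> 0 \<le> w a"
  shows "0 \<le> hom_weight w V E VF EF"
  unfolding hom_weight_eq_sum_weight
  by (intro sum_nonneg) (meson assms homs_subset_PiE subsetD weight_nonneg)

lemma homs_comp:
  assumes "\<phi> \<in> homs V E VF EF" "\<psi> \<in> homs V' E' V E" "E' \<subseteq> V' \<times> V'"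
  shows "restrict (\<phi> \<circ> \<psi>) V' \<in> homs V' E' VF EF"
  using assms unfolding homs_def by (auto simp: PiE_iff subset_iff) (metis case_prodD)

lemma hom_weight_graph_iso:
  assumes "graph_iso V E V' E'" "E \<subseteq> V \<times> V" "E' \<subseteq> V' \<times> V'"
  shows "hom_weight w V E VF EF = hom_weight w V' E' VF EF"
proof -
  obtain f where f: "bij_betw f V V'" and f_edges: "\<forall>x\<in>V. \<forall>y\<in>V. (x, y) \<in> E \<longleftrightarrow> (f x, f y) \<in> E'"
    using assms(1) unfolding graph_iso_def by blast
  define g where "g = inv_into V f"
  have g: "bij_betw g V' V" unfolding g_def using f by (rule bij_betw_inv_into)
  have gf: "g (f x) = x" if "x \<in> V" for x
    using f that by (simp add: g_def bij_betw_inv_into_left)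
  have fg: "f (g y) = y" if "y \<in> V'" for y
    using f that by (simp add: g_def bij_betw_inv_into_right)
  have f_hom: "restrict f V \<in> homs V E V' E'"
    using bij_betwE[OF f] f_edges assms(2) unfolding homs_def by auto
  have g_hom: "restrict g V' \<in> homs V' E' V E"
  proof -
    have "(g x, g y) \<in> E" if "(x, y) \<in> E'" for x y
      using that assms(3) f_edges bij_betwE[OF g] fg by (metis mem_Sigma_iff subsetD)
    then show ?thesis using bij_betwE[OF g] assms(3) unfolding homs_def by auto
  qed
  show ?thesis
    unfolding hom_weight_eq_sum_weight
  proof (rule sum.reindex_bij_witness[of _ "\<lambda>\<psi>. restrict (\<psi> \<circ> restrict f V) V"
                                            "\<lambda>\<phi>. restrict (\<phi> \<circ> restrict g V') V'"])
    fix \<phi> assume \<phi>: "\<phi> \<in> homs V E VF EF"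
    show "restrict (\<phi> \<circ> restrict g V') V' \<in> homs V' E' VF EF"
      using homs_comp[OF \<phi> g_hom assms(3)] .
    show "restrict (restrict (\<phi> \<circ> restrict g V') V' \<circ> restrict f V) V = \<phi>"
      using \<phi> bij_betwE[OF f] gf homs_subset_PiE by (fastforce simp: fun_eq_iff PiE_iff extensional_def)
    show "weight w V' (restrict (\<phi> \<circ> restrict g V') V') = weight w V \<phi>"
      unfolding weight_def using prod.reindex_bij_betw[OF g, of "\<lambda>x. w (\<phi> x)"] by simp
  next
    fix \<psi> assume \<psi>: "\<psi> \<in> homs V' E' VF EF"
    show "restrict (\<psi> \<circ> restrict f V) V \<in> homs V E VF EF"
      using homs_comp[OF \<psi> f_hom assms(2)] .
    show "restrict (restrict (\<psi> \<circ> restrict f V) V \<circ> restrict g V') V' = \<psi>"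
      using \<psi> bij_betwE[OF g] fg homs_subset_PiE by (fastforce simp: fun_eq_iff PiE_iff extensional_def)
  qed
qed

lemma restrict_in_homs_subgraph:
  assumes "\<phi> \<in> homs V E VF EF" "V' \<subseteq> V" "E' \<subseteq> E" "E' \<subseteq> V' \<times> V'"
  shows "restrict \<phi> V' \<in> homs V' E' VF EF"
  using assms unfolding homs_def by (auto simp: PiE_iff subset_iff) (metis case_prodD)

lemma hom_weight_power_le_prod_cover:
  fixes CV :: "'i \<Rightarrow> 'a set" and CE :: "'i \<Rightarrow> ('a \<times> 'a) set"
  assumes "finite VG" "finite VF" "\<And>a. a \<in> VF \<Longrightarrow> 0 \<le> w a" "finite I"
    and "\<And>i. i \<in> I \<Longrightarrow> CV i \<subseteq> VG" "\<And>i. i \<in> I \<Longrightarrow> CE i \<subseteq> EG"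
    and "\<And>i. i \<in> I \<Longrightarrow> CE i \<subseteq> CV i \<times> CV i"
    and "\<And>v. v \<in> VG \<Longrightarrow> card {i\<in>I. v \<in> CV i} = c" "c > 0"
  shows "hom_weight w VG EG VF EF ^ c \<le> (\<Prod>i\<in>I. hom_weight w (CV i) (CE i) VF EF)"
proof -
  define f :: "'i \<Rightarrow> _ \<Rightarrow> real" where "f i y = of_bool (y \<in> homs (CV i) (CE i) VF EF)" for i y
  have "hom_weight w VG EG VF EF
      = (\<Sum>x\<in>homs VG EG VF EF. weight w VG x * (\<Prod>i\<in>I. f i (restrict x (CV i))))"
    unfolding hom_weight_eq_sum_weight f_def using assms(5-7)
    by (intro sum.cong refl) (simp add: restrict_in_homs_subgraph)
  also have "\<dots> \<le> (\<Sum>x\<in>VG \<rightarrow>\<^sub>E VF. weight w VG x * (\<Prod>i\<in>I. f i (restrict x (CV i))))"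
  proof (rule sum_mono2)
    show "finite (VG \<rightarrow>\<^sub>E VF)" using assms(1,2) by (rule finite_PiE)
    show "0 \<le> weight w VG x * (\<Prod>i\<in>I. f i (restrict x (CV i)))"
      if "x \<in> (VG \<rightarrow>\<^sub>E VF) - homs VG EG VF EF" for x
      using that assms(3) by (intro mult_nonneg_nonneg prod_nonneg weight_nonneg[of VF]) (auto simp: f_def)
  qed (rule homs_subset_PiE)
  finally have "hom_weight w VG EG VF EF ^ c
      \<le> (\<Sum>x\<in>VG \<rightarrow>\<^sub>E VF. weight w VG x * (\<Prod>i\<in>I. f i (restrict x (CV i)))) ^ c"
    using assms(3) by (intro power_mono hom_weight_nonneg)
  also have "\<dots> \<le> (\<Prod>i\<in>I. \<Sum>y\<in>CV i \<rightarrow>\<^sub>E VF. weight w (CV i) y * f i y ^ c)"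
    using assms by (intro finner_inequality) (auto simp: f_def)
  also have "\<dots> = (\<Prod>i\<in>I. hom_weight w (CV i) (CE i) VF EF)"
  proof (rule prod.cong[OF refl])
    fix i assume "i \<in> I"
    then have "finite (CV i \<rightarrow>\<^sub>E VF)"
      using assms(1,2,5) by (intro finite_PiE) (auto intro: finite_subset)
    moreover have "(of_bool P :: real) ^ c = of_bool P" for P using assms(9) by simp
    ultimately show "(\<Sum>y\<in>CV i \<rightarrow>\<^sub>E VF. weight w (CV i) y * f i y ^ c) = hom_weight w (CV i) (CE i) VF EF"
      by (simp add: f_def hom_weight_eq_sum_weight Int_absorb1 homs_subset_PiE)
  qed
  finally show ?thesis .
qed

lemma sum_card_uniform_cover:
  assumes "finite V" "finite I" "\<And>i. i \<in> I \<Longrightarrow> C i \<subseteq> V"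
    and "\<And>v. v \<in> V \<Longrightarrow> card {i\<in>I. v \<in> C i} = c"
  shows "(\<Sum>i\<in>I. card (C i)) = c * card V"
proof -
  have "(\<Sum>i\<in>I. card (C i)) = (\<Sum>i\<in>I. \<Sum>v\<in>V. of_bool (v \<in> C i))"
    using assms(1,3) by (intro sum.cong refl) (simp add: Int_absorb1)
  also have "\<dots> = (\<Sum>v\<in>V. card {i\<in>I. v \<in> C i})"
    using assms(2) by (subst sum.swap) (simp add: Int_def conj_commute)
  also have "\<dots> = c * card V" using assms(4) by simp
  finally show ?thesis .
qed

lemma fractionally_tilesE:
  assumes "fractionally_tiles VH EH VG EG"
  obtains I :: "nat set" and C c where "finite I" "c > 0" "\<And>i. i \<in> I \<Longrightarrow> is_copy VH EH VG EG (C i)"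
    "\<And>v. v \<in> VG \<Longrightarrow> card {i\<in>I. v \<in> fst (C i)} = c"
proof -
  obtain cs c where "\<forall>C\<in>set cs. is_copy VH EH VG EG C" "c > 0"
    "\<forall>v\<in>VG. length (filter (\<lambda>C. v \<in> fst C) cs) = c"
    using assms unfolding fractionally_tiles_def by blast
  then show thesis
    by (intro that[of "{..<length cs}" c "(!) cs"]) (auto simp: length_filter_conv_card)
qed

lemma hom_weight_fractional_tiling:
  assumes G: "graph VG EG" and H: "graph VH EH" and "VG \<noteq> {}" "VH \<noteq> {}"
    and "fractionally_tiles VH EH VG EG" "finite VF" "\<And>a. a \<in> VF \<Longrightarrow> 0 \<le> w a"
  shows "hom_weight w VG EG VF EF powr (1 / card VG) \<le> hom_weight w VH EH VF EF powr (1 / card VH)"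
proof -
  obtain I :: "nat set" and c C where I: "finite I" "c > 0"
    and copies: "\<And>i. i \<in> I \<Longrightarrow> is_copy VH EH VG EG (C i)"
    and cover: "\<And>v. v \<in> VG \<Longrightarrow> card {i\<in>I. v \<in> fst (C i)} = c"
    using fractionally_tilesE[OF assms(5)] by metis
  have fin: "finite VG" "finite VH" and EH: "EH \<subseteq> VH \<times> VH" using G H by (auto simp: graph_def)
  have copy_weight: "hom_weight w (fst (C i)) (snd (C i)) VF EF = hom_weight w VH EH VF EF"
    and copy_card: "card (fst (C i)) = card VH" if "i \<in> I" for i
    using copies[OF that] EH by (auto simp: is_copy_def graph_iso_def hom_weight_graph_iso
        intro: bij_betw_same_card)
  have "hom_weight w VG EG VF EF ^ c \<le> (\<Prod>i\<in>I. hom_weight w (fst (C i)) (snd (C i)) VF EF)"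
    using fin I assms(6,7) copies cover
    by (intro hom_weight_power_le_prod_cover) (auto simp: is_copy_def)
  also have "\<dots> = hom_weight w VH EH VF EF ^ card I" by (simp add: copy_weight)
  finally have power_le: "hom_weight w VG EG VF EF ^ c \<le> hom_weight w VH EH VF EF ^ card I" .
  have "c * card VG = card I * card VH"
    using sum_card_uniform_cover[of VG I "\<lambda>i. fst (C i)" c] fin I copies cover
    by (simp add: copy_card is_copy_def)
  moreover have "card VG > 0" "card VH > 0" using fin assms(3,4) by (simp_all add: card_gt_0_iff)
  ultimately show ?thesis
    using power_le I(2) assms(7) by (intro powr_inverse_le_of_power_le hom_weight_nonneg)
qed

lemma card_indep_sets_eq_hom_weight:
  assumes "E \<subseteq> V \<times> V"
  shows "real (card (indep_sets V E)) = hom_weight (\<lambda>_. 1) V E UNIV {(x, y). \<not> (x \<and> y)}"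
proof -
  have "bij_betw (\<lambda>S. restrict (\<lambda>x. x \<in> S) V) (indep_sets V E) (homs V E UNIV {(x, y). \<not> (x \<and> y)})"
    by (rule bij_betw_byWitness[where f' = "\<lambda>\<phi>. {x\<in>V. \<phi> x}"])
       (use assms in \<open>auto simp: indep_sets_def homs_def fun_eq_iff PiE_iff extensional_def\<close>)
  then show ?thesis by (simp add: hom_weight_def bij_betw_same_card)
qed

lemma card_proper_colorings_eq_hom_weight:
  "real (card (proper_colorings q V E)) = hom_weight (\<lambda>_. 1) V E {..<q} {(x, y). x \<noteq> y}"
proof -
  have "proper_colorings q V E = homs V E {..<q} {(x, y). x \<noteq> y}"
    by (auto simp: proper_colorings_def homs_def)
  then show ?thesis by (simp add: hom_weight_def)
qed

theorem proposition5p2: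
  fixes VG :: "'a set" and EG :: "('a \<times> 'a) set"
    and VH :: "'b set" and EH :: "('b \<times> 'b) set"
    and q :: nat
    and VF :: "'c set" and EF :: "('c \<times> 'c) set" and w :: "'c \<Rightarrow> real"
  assumes "graph VG EG" and "graph VH EH"
    and "VG \<noteq> {}" and "VH \<noteq> {}"
    and "fractionally_tiles VH EH VG EG"
    and "finite VF" and "EF \<subseteq> VF \<times> VF" and "sym EF"
    and "\<forall>v\<in>VF. 0 < w v"
  shows "real (card (indep_sets VG EG)) powr (1 / real (card VG))
           \<le> real (card (indep_sets VH EH)) powr (1 / real (card VH)) \<and>
         real (card (proper_colorings q VG EG)) powr (1 / real (card VG))
           \<le> real (card (proper_colorings q VH EH)) powr (1 / real (card VH)) \<and>
         hom_weight w VG EG VF EF powr (1 / real (card VG))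
           \<le> hom_weight w VH EH VF EF powr (1 / real (card VH))"
proof (intro conjI)
  have EG: "EG \<subseteq> VG \<times> VG" and EH: "EH \<subseteq> VH \<times> VH" using assms(1,2) by (auto simp: graph_def)
  show "real (card (indep_sets VG EG)) powr (1 / real (card VG))
      \<le> real (card (indep_sets VH EH)) powr (1 / real (card VH))"
    unfolding card_indep_sets_eq_hom_weight[OF EG] card_indep_sets_eq_hom_weight[OF EH]
    by (intro hom_weight_fractional_tiling[OF assms(1-5)]) auto
  show "real (card (proper_colorings q VG EG)) powr (1 / real (card VG))
      \<le> real (card (proper_colorings q VH EH)) powr (1 / real (card VH))"
    unfolding card_proper_colorings_eq_hom_weight
    by (intro hom_weight_fractional_tiling[OF assms(1-5)]) auto
  show "hom_weight w VG EG VF EF powr (1 / real (card VG))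
      \<le> hom_weight w VH EH VF EF powr (1 / real (card VH))"
    using assms(9) by (intro hom_weight_fractional_tiling[OF assms(1-6)]) (auto intro: less_imp_le)
qed

end
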